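(* A rhombic satin of odd order belongs to species $28_o$, and a rhombic satin of even order belongs to species $28_e$.
   Context: A prefabric consists of two perpendicular layers of unit-width strands, warps (vertical) and wefts (horizontal). The plane is divided into unit square cells. Each cell is dark if the warp is on top (seen from the front) and pale otherwise. A symmetry is an isometry of the plane, possibly combined with the side reversal $\tau$, preserving the prefabric. $G_1$ denotes the planar part of the symmetry group, and $H_1$ its side-preserving subgroup. Let $\delta$ be the length of a cell diagonal and $\beta=\delta/2$. The $(n,s)$ satin, with $\gcd(n,s)=1$, is the design of period $n$ in which row $i$ has its single dark cell in column $is \bmod n$. It is isonemal iff $s^2\equiv\pm1\pmod n$ and square iff $s^2\equiv-1\pmod n$. A non-square isonemal satin is rectangular if $n$ is even and $s^2\equiv 1\pmod{2n}$. Otherwise it is called rhombic. A prefabric belongs to species 28 if: - $G_1$ is of crystallographic type $cmm$, with axes at $45^\circ$ to the strands; - the glide-reflections whose axes lie between the mirrors are side-reversing; - all half-turns are side-preserving, so that $H_1$ is of type $p2$ with the rhombic $G_1$ lattice unit; - some half-turn centres lie at cell centres. The supplementary half-turn centres are those at intersections of glide-reflection axes. In each rhombic lattice unit they are the four corners of a central rectangle, which is bounded by glide-reflection axes. - Species $28_e$: the supplementary half-turn centres lie at cell corners, and the central rectangle measures $a\delta$ by $b\delta$ with $a$ odd, $b$ even, and $\gcd(a,b)=1$. - Species $28_o$: the supplementary half-turn centres lie on cell edges but not at cell corners, and the central rectangle measures $a\beta$ by $b\beta$ with $a,b$ odd and $\gcd(a,b)=1$. *)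

theory Defs
  imports "HOL-Analysis.Analysis" "HOL-Number_Theory.Cong"
begin

text \<open>Cells are the unit squares [i,i+1] \<times> [j,j+1] with i,j integers; the cell (i,j)
  lies in column i and row j.  A prefabric (given by its design) is a map
  int \<times> int \<Rightarrow> bool, True meaning dark (warp on top seen from the front).\<close>

type_synonym pt = "real \<times> real"
type_synonym prefabric = "int \<times> int \<Rightarrow> bool"

definition cell_centre :: "int \<times> int \<Rightarrow> pt" where
  "cell_centre c = (of_int (fst c) + 1/2, of_int (snd c) + 1/2)"

definition cell_centres :: "pt set" where
  "cell_centres = range cell_centre"

definition cell_corners :: "pt set" where
  "cell_corners = {p. fst p \<in> \<int> \<and> snd p \<in> \<int>}"

definition cell_edge_points :: "pt set" where
  "cell_edge_points = {p. fst p \<in> \<int> \<or> snd p \<in> \<int>}"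

definition isometry :: "(pt \<Rightarrow> pt) \<Rightarrow> bool" where
  "isometry f \<longleftrightarrow> (\<forall>x y. dist (f x) (f y) = dist x y)"

text \<open>An isometry of the plane respecting the strand structure (cell grid):
  it permutes the cells (equivalently the cell centres).\<close>
definition grid_isometry :: "(pt \<Rightarrow> pt) \<Rightarrow> bool" where
  "grid_isometry f \<longleftrightarrow> isometry f \<and> f ` cell_centres = cell_centres"

text \<open>The isometry interchanges the strand directions (warps go to wefts).\<close>
definition swaps_strands :: "(pt \<Rightarrow> pt) \<Rightarrow> bool" where
  "swaps_strands f \<longleftrightarrow> fst (f (1,0)) = fst (f (0,0))"

text \<open>(f, t) is a symmetry of the prefabric P: f is a grid isometry, t says whether
  it is combined with the side reversal \<tau>.  The colour (which strand is on top)
  of the image cell equals that of the cell iff f does not interchange strand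
  directions exactly when it is not combined with \<tau>.\<close>
definition symmetry :: "prefabric \<Rightarrow> (pt \<Rightarrow> pt) \<Rightarrow> bool \<Rightarrow> bool" where
  "symmetry P f t \<longleftrightarrow> grid_isometry f \<and>
     (\<forall>c d. f (cell_centre c) = cell_centre d \<longrightarrow> P d = (P c = (swaps_strands f = t)))"

definition G1 :: "prefabric \<Rightarrow> (pt \<Rightarrow> pt) set" where
  "G1 P = {f. \<exists>t. symmetry P f t}"

definition H1 :: "prefabric \<Rightarrow> (pt \<Rightarrow> pt) set" where
  "H1 P = {f. symmetry P f False}"

definition dotp :: "pt \<Rightarrow> pt \<Rightarrow> real" where
  "dotp a b = fst a * fst b + snd a * snd b"

definition line_thru :: "pt \<Rightarrow> pt \<Rightarrow> pt set" where
  "line_thru p u = range (\<lambda>t::real. p + t *\<^sub>R u)"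

text \<open>Reflection in the line through p with unit direction u.\<close>
definition reflect_in :: "pt \<Rightarrow> pt \<Rightarrow> pt \<Rightarrow> pt" where
  "reflect_in p u x = p + ((2 * dotp (x - p) u) *\<^sub>R u - (x - p))"

text \<open>f is a glide-reflection (possibly with zero glide, i.e. a reflection) with axis L.\<close>
definition glide_refl_axis :: "(pt \<Rightarrow> pt) \<Rightarrow> pt set \<Rightarrow> bool" where
  "glide_refl_axis f L \<longleftrightarrow> (\<exists>p u d. dotp u u = 1 \<and> L = line_thru p u \<and>
       f = (\<lambda>x. reflect_in p u x + d *\<^sub>R u))"

definition mirror_axis_of :: "(pt \<Rightarrow> pt) \<Rightarrow> pt set \<Rightarrow> bool" where
  "mirror_axis_of f L \<longleftrightarrow> (\<exists>p u. dotp u u = 1 \<and> L = line_thru p u \<and> f = reflect_in p u)"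

definition half_turn :: "(pt \<Rightarrow> pt) \<Rightarrow> pt \<Rightarrow> bool" where
  "half_turn f c \<longleftrightarrow> f = (\<lambda>x. 2 *\<^sub>R c - x)"

definition mirror_axis :: "(pt \<Rightarrow> pt) set \<Rightarrow> pt set \<Rightarrow> bool" where
  "mirror_axis G L \<longleftrightarrow> (\<exists>f\<in>G. mirror_axis_of f L)"

definition between_glide_axis :: "(pt \<Rightarrow> pt) set \<Rightarrow> pt set \<Rightarrow> bool" where
  "between_glide_axis G L \<longleftrightarrow> (\<exists>f\<in>G. glide_refl_axis f L) \<and> \<not> mirror_axis G L"

text \<open>A standard group of type cmm: mirrors x = k, y = k (k integer), translation
  lattice {(a,b) \<in> Z x Z. a + b even} (rhombic / centred rectangular).\<close>
definition std_cmm :: "(pt \<Rightarrow> pt) set" where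
  "std_cmm = {f. \<exists>e1 e2 :: bool. \<exists>a b :: int. even (a + b) \<and>
      f = (\<lambda>x. ((if e1 then - fst x else fst x) + of_int a,
                 (if e2 then - snd x else snd x) + of_int b))}"

definition affine_bij :: "(pt \<Rightarrow> pt) \<Rightarrow> bool" where
  "affine_bij \<phi> \<longleftrightarrow> (\<exists>a b c d e g :: real. a * d - b * c \<noteq> 0 \<and>
      \<phi> = (\<lambda>x. (a * fst x + b * snd x + e, c * fst x + d * snd x + g)))"

definition type_cmm :: "(pt \<Rightarrow> pt) set \<Rightarrow> bool" where
  "type_cmm G \<longleftrightarrow> (\<exists>\<phi>. affine_bij \<phi> \<and> G = (\<lambda>g. inv \<phi> \<circ> g \<circ> \<phi>) ` std_cmm)"

definition diagonal_line :: "pt set \<Rightarrow> bool" where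
  "diagonal_line L \<longleftrightarrow> (\<exists>p u. dotp u u = 1 \<and> L = line_thru p u \<and> \<bar>fst u\<bar> = \<bar>snd u\<bar>)"

definition species28 :: "prefabric \<Rightarrow> bool" where
  "species28 P \<longleftrightarrow>
     type_cmm (G1 P) \<and>
     (\<forall>f\<in>G1 P. \<forall>L. mirror_axis_of f L \<longrightarrow> diagonal_line L) \<and>
     (\<forall>f\<in>G1 P. \<forall>L. glide_refl_axis f L \<and> between_glide_axis (G1 P) L \<longrightarrow> f \<notin> H1 P) \<and>
     (\<forall>f\<in>G1 P. \<forall>c. half_turn f c \<longrightarrow> f \<in> H1 P) \<and>
     (\<exists>f\<in>G1 P. \<exists>c\<in>cell_centres. half_turn f c)"

definition supp_centre :: "(pt \<Rightarrow> pt) set \<Rightarrow> pt \<Rightarrow> bool" where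
  "supp_centre G c \<longleftrightarrow> (\<exists>L M. between_glide_axis G L \<and> between_glide_axis G M \<and>
      L \<noteq> M \<and> c \<in> L \<and> c \<in> M)"

definition par_dist :: "pt \<Rightarrow> pt \<Rightarrow> pt \<Rightarrow> real" where
  "par_dist p u p' = \<bar>dotp (p' - p) (- snd u, fst u)\<bar>"

definition axis_gap :: "(pt \<Rightarrow> pt) set \<Rightarrow> pt \<Rightarrow> pt \<Rightarrow> real \<Rightarrow> bool" where
  "axis_gap G p u X \<longleftrightarrow> X > 0 \<and>
     (\<exists>p'. between_glide_axis G (line_thru p' u) \<and> par_dist p u p' = X) \<and>
     (\<forall>p'. between_glide_axis G (line_thru p' u) \<and> line_thru p' u \<noteq> line_thru p u \<longrightarrow> X \<le> par_dist p u p')"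

definition central_rect :: "(pt \<Rightarrow> pt) set \<Rightarrow> real \<Rightarrow> real \<Rightarrow> bool" where
  "central_rect G X Y \<longleftrightarrow> (\<exists>p u q v. dotp u u = 1 \<and> dotp v v = 1 \<and> dotp u v = 0 \<and>
      between_glide_axis G (line_thru p u) \<and> between_glide_axis G (line_thru q v) \<and>
      axis_gap G p u X \<and> axis_gap G q v Y)"

definition cell_diag :: real where "cell_diag = sqrt 2"
definition half_diag :: real where "half_diag = cell_diag / 2"

definition species28e :: "prefabric \<Rightarrow> bool" where
  "species28e P \<longleftrightarrow> species28 P \<and>
     (\<forall>c. supp_centre (G1 P) c \<longrightarrow> c \<in> cell_corners) \<and>
     (\<exists>a b :: nat. odd a \<and> even b \<and> coprime a b \<and>
        central_rect (G1 P) (a * cell_diag) (b * cell_diag))"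

definition species28o :: "prefabric \<Rightarrow> bool" where
  "species28o P \<longleftrightarrow> species28 P \<and>
     (\<forall>c. supp_centre (G1 P) c \<longrightarrow> c \<in> cell_edge_points - cell_corners) \<and>
     (\<exists>a b :: nat. odd a \<and> odd b \<and> coprime a b \<and>
        central_rect (G1 P) (a * half_diag) (b * half_diag))"

definition satin :: "int \<Rightarrow> int \<Rightarrow> prefabric" where
  "satin n s = (\<lambda>c. fst c mod n = (snd c * s) mod n)"

definition isonemal_satin :: "int \<Rightarrow> int \<Rightarrow> bool" where
  "isonemal_satin n s \<longleftrightarrow> [s^2 = 1] (mod n) \<or> [s^2 = -1] (mod n)"

definition square_satin :: "int \<Rightarrow> int \<Rightarrow> bool" where
  "square_satin n s \<longleftrightarrow> [s^2 = -1] (mod n)"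

definition rectangular_satin :: "int \<Rightarrow> int \<Rightarrow> bool" where
  "rectangular_satin n s \<longleftrightarrow> isonemal_satin n s \<and> \<not> square_satin n s \<and>
      even n \<and> [s^2 = 1] (mod (2 * n))"

definition rhombic_satin :: "int \<Rightarrow> int \<Rightarrow> bool" where
  "rhombic_satin n s \<longleftrightarrow> isonemal_satin n s \<and> \<not> square_satin n s \<and>
      \<not> rectangular_satin n s"

end

theory Submission
  imports Defs
begin

(* Let the (n,s) satin be rhombic, so s^2 = 1 (mod n) but not s^2 = 1 (mod 2n) when n is even.
   Split n = p q with q dividing s - 1 and p dividing s + 1.  The argument has four parts.
   1. Grid isometries.  Every isometry permuting the cell centres is an integral affine map
      whose linear part is one of the eight symmetries of the square.  Since no two adjacent
      cells of the satin are dark, a symmetry is side-reversing exactly when it interchanges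
      warps and wefts, and only the four maps grid_map (identity, half-turn and the two diagonal
      reflections, followed by a cell translation (a,b)) survive; they are symmetries iff
      n divides a - b s ("admissible" translations).
   2. Admissible translations are described by a + b = p A, a - b = q B with A + B even; this
      gives an explicit affine conjugation of G1 onto the standard group of type cmm.
   3. The glide-reflection axes of G1 are the diagonals x - y = q Y/2 and x + y = 1 + p X/2;
      they are mirrors for even Y resp. X, so the axes between the mirrors are the odd ones.
   4. Intersections of these axes and the spacing of consecutive ones give the supplementary
      half-turn centres and a central rectangle of size q beta by p beta; the parities of p, q
      (both odd, resp. both even with p/2 + q/2 odd) decide between species 28_o and 28_e. *)

section \<open>Arithmetic of rhombic satins\<close>

lemma rhombic_satin_conditions:
  fixes n s :: int
  assumes "n > 0" "coprime n s" "rhombic_satin n s"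
  shows "n dvd s^2 - 1" "n \<ge> 3" "even n \<Longrightarrow> \<not> (2*n) dvd (s^2 - 1)"
proof -
  have iso: "[s^2 = 1] (mod n) \<or> [s^2 = -1] (mod n)" and not_square: "\<not> [s^2 = -1] (mod n)"
    using assms(3) unfolding rhombic_satin_def isonemal_satin_def square_satin_def by auto
  then have one: "[s^2 = 1] (mod n)" by auto
  then show "n dvd s^2 - 1" by (simp add: cong_iff_dvd_diff)
  show "even n \<Longrightarrow> \<not> (2*n) dvd (s^2 - 1)"
    using assms(3) one
    unfolding rhombic_satin_def rectangular_satin_def isonemal_satin_def square_satin_def
    by (auto simp: cong_iff_dvd_diff)
  show "n \<ge> 3"
  proof (rule ccontr)
    assume "\<not> n \<ge> 3"
    then have "n = 1 \<or> n = 2" using assms(1) by auto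
    moreover have "n \<noteq> 1" using not_square by (auto simp: cong_def)
    moreover have "n \<noteq> 2"
    proof
      assume n2: "n = 2"
      then have "odd s" using assms(2) by auto
      then have "[s^2 = -1] (mod n)" using n2 by (simp add: cong_iff_dvd_diff)
      then show False using not_square by simp
    qed
    ultimately show False by blast
  qed
qed

text \<open>If n divides s^2 - 1 = (s - 1)(s + 1), then n splits as p q with q dividing s - 1 and
  p dividing s + 1 (take q = gcd n (s - 1)).\<close>
lemma modulus_split:
  fixes n s :: int
  assumes "n > 0" "n dvd s^2 - 1"
  shows "\<exists>p q. p > 0 \<and> q > 0 \<and> p * q = n \<and> q dvd s - 1 \<and> p dvd s + 1"
proof -
  define q where "q = gcd n (s - 1)"
  define p where "p = n div q"
  have q_pos: "q > 0" using assms(1) unfolding q_def by simp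
  have pq: "p * q = n" unfolding p_def q_def by simp
  have p_pos: "p > 0" using pq q_pos assms(1) by (metis zero_less_mult_pos2)
  obtain c where c: "s - 1 = q * c" unfolding q_def by (meson dvd_def gcd_dvd2)
  have cop: "coprime p c"
  proof -
    have "coprime (n div gcd n (s-1)) ((s-1) div gcd n (s-1))"
      using assms(1) by (intro div_gcd_coprime) auto
    moreover have "(s-1) div q = c" using c q_pos by simp
    ultimately show ?thesis unfolding p_def q_def by simp
  qed
  have "s^2 - 1 = (s - 1) * (s + 1)" by (simp add: power2_eq_square algebra_simps)
  then have "p * q dvd q * c * (s + 1)" using assms(2) pq c by simp
  then have "p dvd c * (s + 1)" using q_pos by (simp add: mult.commute mult.left_commute)
  then have "p dvd s + 1" using cop by (simp add: coprime_dvd_mult_right_iff)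
  then show ?thesis using p_pos q_pos pq c by (intro exI[of _ p] exI[of _ q]) auto
qed

lemma modulus_split_even:
  fixes n s p q :: int
  assumes "p > 0" "q > 0" "p * q = n" "q dvd s - 1" "p dvd s + 1" "even n" "coprime n s"
    "\<not> (2*n) dvd (s^2 - 1)"
  shows "odd ((s-1) div q)" "odd ((s+1) div p)" "even p" "even q"
proof -
  obtain c1 where c1: "s - 1 = q * c1" using assms(4) by auto
  obtain c2 where c2: "s + 1 = p * c2" using assms(5) by auto
  have prod: "s^2 - 1 = n * (c1 * c2)"
  proof -
    have "s^2 - 1 = (s - 1) * (s + 1)" by (simp add: power2_eq_square algebra_simps)
    also have "\<dots> = (p * q) * (c1 * c2)" using c1 c2 by (simp add: algebra_simps)
    finally show ?thesis using assms(3) by simp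
  qed
  have "odd (c1 * c2)"
  proof
    assume "even (c1*c2)"
    then obtain k where "c1 * c2 = 2 * k" by auto
    then have "s^2 - 1 = (2*n) * k" using prod by simp
    then show False using assms(8) by simp
  qed
  then have o1: "odd c1" and o2: "odd c2" by auto
  have "odd s" using assms(6,7) by (metis coprime_common_divisor dvd_mult_right even_iff_mod_2_eq_zero odd_one)
  then have "even (s - 1)" "even (s + 1)" by auto
  then show "even p" "even q" using c1 c2 o1 o2 by auto
  show "odd ((s-1) div q)" using c1 o1 assms(2) by simp
  show "odd ((s+1) div p)" using c2 o2 assms(1) by simp
qed

section \<open>Cells and their centres\<close>

lemma int_squares_sum_one:
  fixes m k :: int
  assumes "m^2 + k^2 = 1"
  shows "(m = 1 \<and> k = 0) \<or> (m = -1 \<and> k = 0) \<or> (m = 0 \<and> k = 1) \<or> (m = 0 \<and> k = -1)"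
proof -
  have "m^2 \<le> 1" "k^2 \<le> 1" using assms zero_le_power2[of m] zero_le_power2[of k] by linarith+
  then have "\<bar>m\<bar> \<le> 1" "\<bar>k\<bar> \<le> 1" by (simp_all add: abs_square_le_1)
  then have "m \<in> {-1,0,1}" "k \<in> {-1,0,1}" by auto
  then show ?thesis using assms by auto
qed

lemma dist_cell_centre:
  "dist (cell_centre (i1,j1)) (cell_centre (i2,j2)) =
     sqrt ((of_int (i1-i2))^2 + (of_int (j1-j2))^2)"
  by (simp add: cell_centre_def dist_Pair_Pair dist_real_def)

lemma int_of_sqrt_eq:
  fixes a b c :: int
  assumes "sqrt ((of_int a)^2 + (of_int b)^2) = sqrt (of_int c)" "c \<ge> 0"
  shows "a^2 + b^2 = c"
proof -
  have "(of_int a)^2 + (of_int b)^2 = (of_int c :: real)"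
    using assms by (metis add_nonneg_nonneg of_int_0_le_iff real_sqrt_eq_iff zero_le_power2)
  then have "of_int (a^2 + b^2) = (of_int c :: real)" by simp
  then show ?thesis by (simp only: of_int_eq_iff)
qed

lemma cell_centre_eq_iff: "cell_centre c = cell_centre d \<longleftrightarrow> c = d"
  by (cases c, cases d) (auto simp: cell_centre_def)

lemma satin_iff_dvd: "satin n s (i,j) \<longleftrightarrow> n dvd (i - j * s)"
  by (simp add: satin_def mod_eq_dvd_iff)

section \<open>Grid isometries\<close>

text \<open>An isometry of the plane is affine (Mazur-Ulam): it is determined by the images of
  a point c and of its two unit neighbours c + (1,0), c + (0,1).\<close>
lemma isometry_affine_expand:
  assumes "isometry f"
  shows "f x = f c + (fst x - fst c) *\<^sub>R (f (c + (1,0)) - f c) + (snd x - snd c) *\<^sub>R (f (c + (0,1)) - f c)"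
proof -
  define L where "L = (\<lambda>x. f x - f 0)"
  have "\<forall>x y. dist (L x) (L y) = dist x y"
    using assms unfolding isometry_def L_def by (simp add: dist_norm)
  then have lin: "linear L" by (intro isometry_linear) (simp_all add: L_def)
  have "L (y - c) = L y - L c" for y using lin by (simp add: linear_diff)
  then have diff: "f y - f c = L (y - c)" for y unfolding L_def by simp
  have "L (x - c) = fst (x - c) *\<^sub>R L (1,0) + snd (x - c) *\<^sub>R L (0,1)"
  proof -
    have "x - c = fst (x - c) *\<^sub>R (1,0) + snd (x - c) *\<^sub>R (0,1)" by (simp add: prod_eq_iff)
    then show ?thesis by (metis linear_add[OF lin] linear_scale[OF lin])
  qed
  moreover have "L (1,0) = f (c + (1,0)) - f c" "L (0,1) = f (c + (0,1)) - f c"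
    using diff[of "c + (1,0)"] diff[of "c + (0,1)"] by simp_all
  ultimately show ?thesis using diff[of x] by (simp add: algebra_simps)
qed

lemma grid_isometry_centre_image:
  assumes "grid_isometry f"
  obtains d where "f (cell_centre c) = cell_centre d"
proof -
  have "f (cell_centre c) \<in> cell_centres"
    using assms unfolding grid_isometry_def cell_centres_def by blast
  then show ?thesis using that unfolding cell_centres_def by blast
qed

lemma grid_isometry_cell_dist:
  assumes "isometry f" "f (cell_centre (i,j)) = cell_centre (i',j')"
    "f (cell_centre (k,l)) = cell_centre (k',l')"
  shows "(i'-k')^2 + (j'-l')^2 = (i-k)^2 + (j-l)^2"
proof (rule int_of_sqrt_eq)
  have "dist (cell_centre (i',j')) (cell_centre (k',l')) = dist (cell_centre (i,j)) (cell_centre (k,l))"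
    using assms unfolding isometry_def by metis
  then show "sqrt ((of_int (i'-k'))^2 + (of_int (j'-l'))^2) = sqrt (of_int ((i-k)^2 + (j-l)^2))"
    by (simp add: dist_cell_centre)
qed simp

lemma unit_step_pairs:
  fixes m1 k1 m2 k2 :: int
  assumes "m1^2 + k1^2 = 1" "m2^2 + k2^2 = 1" "(m1-m2)^2 + (k1-k2)^2 = 2"
  shows "(m1,k1,m2,k2) \<in> {(1,0,0,1),(-1,0,0,-1),(0,1,1,0),(0,-1,-1,0),
                            (1,0,0,-1),(-1,0,0,1),(0,1,-1,0),(0,-1,1,0)}"
  using int_squares_sum_one[OF assms(1)] int_squares_sum_one[OF assms(2)] assms(3)
  by (elim disjE conjE; simp)

lemma grid_isometry_integral_form:
  assumes "grid_isometry f"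
  obtains m1 k1 m2 k2 w1 w2 :: int where
    "(m1,k1,m2,k2) \<in> {(1,0,0,1),(-1,0,0,-1),(0,1,1,0),(0,-1,-1,0),
                       (1,0,0,-1),(-1,0,0,1),(0,1,-1,0),(0,-1,1,0)}"
    "\<And>x. f x = (of_int w1 + 1/2 + (fst x - 1/2) * of_int m1 + (snd x - 1/2) * of_int m2,
                 of_int w2 + 1/2 + (fst x - 1/2) * of_int k1 + (snd x - 1/2) * of_int k2)"
proof -
  have iso: "isometry f" using assms grid_isometry_def by blast
  obtain w1 w2 where d0: "f (cell_centre (0,0)) = cell_centre (w1,w2)"
    by (metis grid_isometry_centre_image[OF assms] surj_pair)
  obtain u1 u2 where d1: "f (cell_centre (1,0)) = cell_centre (u1,u2)"
    by (metis grid_isometry_centre_image[OF assms] surj_pair)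
  obtain v1 v2 where d2: "f (cell_centre (0,1)) = cell_centre (v1,v2)"
    by (metis grid_isometry_centre_image[OF assms] surj_pair)
  define m1 k1 m2 k2 where "m1 = u1 - w1" "k1 = u2 - w2" "m2 = v1 - w1" "k2 = v2 - w2"
  have "m1^2 + k1^2 = 1" "m2^2 + k2^2 = 1" "(m1-m2)^2 + (k1-k2)^2 = 2"
    using grid_isometry_cell_dist[OF iso d1 d0] grid_isometry_cell_dist[OF iso d2 d0]
      grid_isometry_cell_dist[OF iso d1 d2]
    by (simp_all add: m1_k1_m2_k2_def power2_commute[of "u1 - v1"])
  note steps = unit_step_pairs[OF this]
  have "f x = (of_int w1 + 1/2 + (fst x - 1/2) * of_int m1 + (snd x - 1/2) * of_int m2,
               of_int w2 + 1/2 + (fst x - 1/2) * of_int k1 + (snd x - 1/2) * of_int k2)" for x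
  proof -
    have c: "cell_centre (0,0) + (1,0) = cell_centre (1,0)" "cell_centre (0,0) + (0,1) = cell_centre (0,1)"
      "fst (cell_centre (0,0)) = 1/2" "snd (cell_centre (0,0)) = 1/2" by (simp_all add: cell_centre_def)
    have "f x = cell_centre (w1,w2) + (fst x - 1/2) *\<^sub>R (cell_centre (u1,u2) - cell_centre (w1,w2))
                + (snd x - 1/2) *\<^sub>R (cell_centre (v1,v2) - cell_centre (w1,w2))"
      using isometry_affine_expand[OF iso, of x "cell_centre (0,0)"] unfolding c d0 d1 d2 .
    then show ?thesis by (simp add: cell_centre_def m1_k1_m2_k2_def prod_eq_iff algebra_simps)
  qed
  then show ?thesis using that steps by blast
qed


text \<open>The four grid isometries that keep the strand structure compatible with a satin:
  identity (ng, sw both false), half-turn about a cell corner (ng), reflection in a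
  diagonal (sw), reflection in an antidiagonal (ng and sw), each followed by the
  translation by the integer vector (a,b).\<close>
definition grid_map :: "bool \<Rightarrow> bool \<Rightarrow> int \<Rightarrow> int \<Rightarrow> pt \<Rightarrow> pt" where
  "grid_map ng sw a b x =
     (if sw then (if ng then (1 - snd x + of_int a, 1 - fst x + of_int b)
                        else (snd x + of_int a, fst x + of_int b))
            else (if ng then (1 - fst x + of_int a, 1 - snd x + of_int b)
                        else (fst x + of_int a, snd x + of_int b)))"

definition grid_map_cell :: "bool \<Rightarrow> bool \<Rightarrow> int \<Rightarrow> int \<Rightarrow> int \<times> int \<Rightarrow> int \<times> int" where
  "grid_map_cell ng sw a b c =
     (if sw then (if ng then (a - snd c, b - fst c) else (snd c + a, fst c + b))
            else (if ng then (a - fst c, b - snd c) else (fst c + a, snd c + b)))"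

lemma grid_map_centre: "grid_map ng sw a b (cell_centre c) = cell_centre (grid_map_cell ng sw a b c)"
  by (cases c) (auto simp: grid_map_def grid_map_cell_def cell_centre_def)

lemma grid_map_cell_surj: "\<exists>c. grid_map_cell ng sw a b c = d"
proof -
  obtain d1 d2 where d: "d = (d1,d2)" by (cases d)
  show ?thesis
  proof (cases sw; cases ng)
    assume "sw" "ng"
    then show ?thesis using d by (intro exI[of _ "(b - d2, a - d1)"]) (simp add: grid_map_cell_def)
  next
    assume "sw" "\<not> ng"
    then show ?thesis using d by (intro exI[of _ "(d2 - b, d1 - a)"]) (simp add: grid_map_cell_def)
  next
    assume "\<not> sw" "ng"
    then show ?thesis using d by (intro exI[of _ "(a - d1, b - d2)"]) (simp add: grid_map_cell_def)
  next
    assume "\<not> sw" "\<not> ng"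
    then show ?thesis using d by (intro exI[of _ "(d1 - a, d2 - b)"]) (simp add: grid_map_cell_def)
  qed
qed

lemma grid_map_isometry: "isometry (grid_map ng sw a b)"
  unfolding isometry_def
proof (intro allI)
  fix x y :: pt
  obtain x1 x2 y1 y2 where xy: "x = (x1,x2)" "y = (y1,y2)" by (cases x, cases y)
  have sq: "dist (a1::real, a2::real) (b1,b2) = dist (c1,c2) (d1,d2)"
    if "(a1-b1)^2 + (a2-b2)^2 = (c1-d1)^2+(c2-d2)^2" for a1 a2 b1 b2 c1 c2 d1 d2 :: real
    using that by (simp add: dist_Pair_Pair dist_real_def)
  show "dist (grid_map ng sw a b x) (grid_map ng sw a b y) = dist x y"
    unfolding xy grid_map_def
    by (cases sw; cases ng; simp only: if_True if_False fst_conv snd_conv; rule sq;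
        simp add: power2_eq_square algebra_simps)
qed

lemma grid_isometry_grid_map: "grid_isometry (grid_map ng sw a b)"
  unfolding grid_isometry_def
proof
  show "isometry (grid_map ng sw a b)" by (rule grid_map_isometry)
  have "range (cell_centre \<circ> grid_map_cell ng sw a b) = range cell_centre"
    using grid_map_cell_surj by (metis image_comp surj_def)
  then show "grid_map ng sw a b ` cell_centres = cell_centres"
    unfolding cell_centres_def image_comp by (simp add: grid_map_centre comp_def)
qed

lemma swaps_strands_grid_map: "swaps_strands (grid_map ng sw a b) = sw"
  by (cases sw; cases ng) (simp_all add: swaps_strands_def grid_map_def)

lemma orientation_preserving_grid_map:
  assumes "(m1,k1,m2,k2) \<in> {(1,0,0,1),(-1,0,0,-1),(0,1,1,0),(0,-1,-1,0)}"
    and fx: "\<And>x. f x = (of_int w1 + 1/2 + (fst x - 1/2) * of_int m1 + (snd x - 1/2) * of_int m2,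
                         of_int w2 + 1/2 + (fst x - 1/2) * of_int k1 + (snd x - 1/2) * of_int k2)"
  shows "\<exists>ng sw. f = grid_map ng sw w1 w2"
  using assms(1)
proof (elim insertE emptyE)
  assume "(m1,k1,m2,k2) = (1,0,0,1)"
  then have "f = grid_map False False w1 w2" by (intro ext) (simp add: fx grid_map_def)
  then show ?thesis by blast
next
  assume "(m1,k1,m2,k2) = (-1,0,0,-1)"
  then have "f = grid_map True False w1 w2" by (intro ext) (simp add: fx grid_map_def)
  then show ?thesis by blast
next
  assume "(m1,k1,m2,k2) = (0,1,1,0)"
  then have "f = grid_map False True w1 w2" by (intro ext) (simp add: fx grid_map_def)
  then show ?thesis by blast
next
  assume "(m1,k1,m2,k2) = (0,-1,-1,0)"
  then have "f = grid_map True True w1 w2" by (intro ext) (simp add: fx grid_map_def)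
  then show ?thesis by blast
qed

section \<open>Symmetries of a satin\<close>

text \<open>The setting: an (n,s) satin with s^2 = 1 (mod n), n \<ge> 3, and a splitting n = p q with
  q dividing s - 1, p dividing s + 1; for even n the rhombic condition is recorded through
  the parities of the cofactors.  The translation by (a,b) (and every grid_map with this
  translation part) preserves the satin iff (a,b) is admissible, i.e. n divides a - b s.\<close>
locale satin_split =
  fixes n s p q :: int
  assumes n_ge_3: "n \<ge> 3" and coprime_ns: "coprime n s" and n_dvd_sq: "n dvd s^2 - 1"
    and p_pos: "p > 0" and q_pos: "q > 0" and pq_eq: "p * q = n"
    and q_dvd: "q dvd s - 1" and p_dvd: "p dvd s + 1"
    and even_split: "even n \<Longrightarrow> odd ((s-1) div q) \<and> odd ((s+1) div p) \<and> even p \<and> even q"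
begin

abbreviation "P \<equiv> satin n s"

definition admissible :: "int \<Rightarrow> int \<Rightarrow> bool" where
  "admissible a b \<longleftrightarrow> n dvd (a - b * s)"

lemma n_not_dvd_1: "\<not> n dvd 1" using n_ge_3 by (auto dest: zdvd_imp_le)

lemma n_not_dvd_2: "\<not> n dvd 2" using n_ge_3 by (auto dest: zdvd_imp_le)

lemma n_not_dvd_s: "\<not> n dvd s"
  using coprime_ns n_not_dvd_1 by (metis coprime_common_divisor dvd_refl)

lemma n_not_dvd_2s: "\<not> n dvd 2 * s"
  using coprime_ns n_not_dvd_2 by (metis coprime_dvd_mult_left_iff)

lemma no_adjacent_dark:
  assumes "dist (cell_centre (i1,j1)) (cell_centre (i2,j2)) = 1" "P (i1,j1)" "P (i2,j2)"
  shows False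
proof -
  have "(i1-i2)^2 + (j1-j2)^2 = 1"
    using assms(1) by (intro int_of_sqrt_eq) (simp_all add: dist_cell_centre)
  note steps = int_squares_sum_one[OF this]
  have "n dvd (i1 - j1 * s) - (i2 - j2 * s)" using assms(2,3) by (simp add: satin_iff_dvd dvd_diff)
  moreover have "(i1 - j1 * s) - (i2 - j2 * s) = (i1 - i2) - (j1 - j2) * s" by (simp add: algebra_simps)
  ultimately have "n dvd (i1 - i2) - (j1 - j2) * s" by simp
  with steps show False using n_not_dvd_1 n_not_dvd_s by auto
qed

text \<open>Hence a symmetry of the satin is combined with the side reversal exactly when it
  interchanges warps and wefts: otherwise the two pale cells (1,0), (2,0) would be mapped
  to two adjacent dark cells.\<close>
lemma symmetry_side_reversal:
  assumes "symmetry P f t"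
  shows "t = swaps_strands f"
proof (rule ccontr)
  assume ne: "t \<noteq> swaps_strands f"
  have gi: "grid_isometry f" using assms symmetry_def by blast
  obtain i1 j1 where d1: "f (cell_centre (1,0)) = cell_centre (i1,j1)"
    by (metis grid_isometry_centre_image[OF gi] surj_pair)
  obtain i2 j2 where d2: "f (cell_centre (2,0)) = cell_centre (i2,j2)"
    by (metis grid_isometry_centre_image[OF gi] surj_pair)
  have pale: "\<not> P (1,0)" "\<not> P (2,0)" using n_ge_3 by (simp_all add: satin_iff_dvd zdvd_not_zless)
  have col: "P d = (P c = (swaps_strands f = t))" if "f (cell_centre c) = cell_centre d" for c d
    using assms that unfolding symmetry_def by blast
  have "P (i1,j1)" "P (i2,j2)" using col[OF d1] col[OF d2] ne pale by auto
  moreover have "dist (cell_centre (i1,j1)) (cell_centre (i2,j2)) = 1"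
  proof -
    have "dist (cell_centre (i1,j1)) (cell_centre (i2,j2)) = dist (cell_centre (1,0)) (cell_centre (2,0))"
      using gi d1 d2 unfolding grid_isometry_def isometry_def by metis
    then show ?thesis by (simp add: dist_cell_centre)
  qed
  ultimately show False using no_adjacent_dark by blast
qed

text \<open>The satin is symmetric under transposition of cells, since s^2 = 1 (mod n).\<close>
lemma satin_transpose: "n dvd (j - i * s) \<longleftrightarrow> n dvd (i - j * s)"
proof -
  have "n dvd (y - x * s)" if "n dvd (x - y * s)" for x y
  proof -
    have "y - x * s = - s * (x - y * s) - y * (s^2 - 1)" by (simp add: power2_eq_square algebra_simps)
    moreover have "n dvd - s * (x - y * s)" using that by (rule dvd_mult)
    moreover have "n dvd y * (s^2 - 1)" using n_dvd_sq by (rule dvd_mult)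
    ultimately show ?thesis by (simp add: dvd_diff)
  qed
  then show ?thesis by blast
qed

lemma grid_map_cell_colour:
  assumes "admissible a b"
  shows "P (grid_map_cell ng sw a b c) = P c"
proof -
  obtain i j where c: "c = (i,j)" by (cases c)
  have t: "n dvd (a - b * s)" using assms admissible_def by simp
  have shift: "(n dvd X) = (n dvd Y)" if "X = (a - b * s) + Y" for X Y
    using that t by (simp add: dvd_add_right_iff)
  show ?thesis
  proof (cases sw; cases ng)
    assume "sw" "ng"
    then show ?thesis using c satin_transpose shift[of "(a - j) - (b - i) * s" "i * s - j"]
      by (simp add: grid_map_cell_def satin_iff_dvd dvd_diff_commute algebra_simps)
  next
    assume "sw" "\<not> ng"
    then show ?thesis using c satin_transpose shift[of "(j + a) - (i + b) * s" "j - i * s"]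
      by (simp add: grid_map_cell_def satin_iff_dvd algebra_simps)
  next
    assume "\<not> sw" "ng"
    then show ?thesis using c shift[of "(a - i) - (b - j) * s" "j * s - i"]
      by (simp add: grid_map_cell_def satin_iff_dvd dvd_diff_commute algebra_simps)
  next
    assume "\<not> sw" "\<not> ng"
    then show ?thesis using c shift[of "(i + a) - (j + b) * s" "i - j * s"]
      by (simp add: grid_map_cell_def satin_iff_dvd algebra_simps)
  qed
qed

lemma grid_map_symmetry:
  assumes "admissible a b"
  shows "symmetry P (grid_map ng sw a b) sw"
  unfolding symmetry_def
proof (intro conjI allI impI)
  show "grid_isometry (grid_map ng sw a b)" by (rule grid_isometry_grid_map)
  fix c d assume "grid_map ng sw a b (cell_centre c) = cell_centre d"
  then have "d = grid_map_cell ng sw a b c" by (simp add: grid_map_centre cell_centre_eq_iff)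
  then show "P d = (P c = (swaps_strands (grid_map ng sw a b) = sw))"
    using grid_map_cell_colour[OF assms] swaps_strands_grid_map by simp
qed

lemma grid_map_in_G1: "admissible a b \<Longrightarrow> grid_map ng sw a b \<in> G1 P"
  using grid_map_symmetry unfolding G1_def by blast

text \<open>A colour-preserving integral affine map of the grid has admissible translation part
  and is not one of the four maps reversing the diagonal orientation: for those, the
  images of the dark cells (0,0) and (s,1) would force n to divide 2 or 2 s.\<close>
lemma colour_preserving_steps:
  assumes col: "\<And>i j. P (w1 + i*m1 + j*m2, w2 + i*k1 + j*k2) = P (i,j)"
    and steps: "(m1,k1,m2,k2) \<in> {(1,0,0,1),(-1,0,0,-1),(0,1,1,0),(0,-1,-1,0),
                                 (1,0,0,-1),(-1,0,0,1),(0,1,-1,0),(0,-1,1,0)}"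
  shows "admissible w1 w2 \<and> (m1,k1,m2,k2) \<in> {(1,0,0,1),(-1,0,0,-1),(0,1,1,0),(0,-1,-1,0)}"
proof -
  have t: "n dvd (w1 - w2 * s)" using col[of 0 0] by (simp add: satin_iff_dvd)
  have "n dvd (w1 + s*m1 + m2) - (w2 + s*k1 + k2) * s" using col[of s 1] by (simp add: satin_iff_dvd)
  moreover have "(w1 + s*m1 + m2) - (w2 + s*k1 + k2) * s
      = (w1 - w2 * s) + (s * m1 + m2 - s * k2 - k1) - k1 * (s^2 - 1)"
    by (simp add: power2_eq_square algebra_simps)
  moreover have "n dvd k1 * (s^2 - 1)" using n_dvd_sq by (rule dvd_mult)
  ultimately have dv: "n dvd (s * m1 + m2 - s * k2 - k1)"
    using t by (metis dvd_add_right_iff dvd_diff_left_iff)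
  have "(m1,k1,m2,k2) \<notin> {(1,0,0,-1),(-1,0,0,1),(0,1,-1,0),(0,-1,1,0)}"
  proof
    assume "(m1,k1,m2,k2) \<in> {(1,0,0,-1),(-1,0,0,1),(0,1,-1,0),(0,-1,1,0)}"
    then have "n dvd 2 * s \<or> n dvd - (2 * s) \<or> n dvd 2 \<or> n dvd -2" using dv by auto
    then show False using n_not_dvd_2 n_not_dvd_2s by (simp only: dvd_minus_iff) blast
  qed
  then show ?thesis using steps t admissible_def by auto
qed

lemma G1_grid_map:
  assumes "f \<in> G1 P"
  obtains ng sw a b where "admissible a b" "f = grid_map ng sw a b"
proof -
  obtain t where sym: "symmetry P f t" using assms G1_def by blast
  have gi: "grid_isometry f" using sym symmetry_def by blast
  have col: "P d = P c" if "f (cell_centre c) = cell_centre d" for c d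
  proof -
    have "P d = (P c = (swaps_strands f = t))" using sym that unfolding symmetry_def by blast
    then show ?thesis using symmetry_side_reversal[OF sym] by simp
  qed
  obtain m1 k1 m2 k2 w1 w2 where steps: "(m1,k1,m2,k2) \<in> {(1,0,0,1),(-1,0,0,-1),(0,1,1,0),(0,-1,-1,0),
                       (1,0,0,-1),(-1,0,0,1),(0,1,-1,0),(0,-1,1,0)}"
    and fx: "\<And>x. f x = (of_int w1 + 1/2 + (fst x - 1/2) * of_int m1 + (snd x - 1/2) * of_int m2,
                 of_int w2 + 1/2 + (fst x - 1/2) * of_int k1 + (snd x - 1/2) * of_int k2)"
    using grid_isometry_integral_form[OF gi] by blast
  have "f (cell_centre (i,j)) = cell_centre (w1 + i*m1 + j*m2, w2 + i*k1 + j*k2)" for i j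
    using fx by (simp add: cell_centre_def algebra_simps)
  then have "P (w1 + i*m1 + j*m2, w2 + i*k1 + j*k2) = P (i,j)" for i j by (rule col)
  from colour_preserving_steps[OF this steps]
  have adm: "admissible w1 w2"
    and kept: "(m1,k1,m2,k2) \<in> {(1,0,0,1),(-1,0,0,-1),(0,1,1,0),(0,-1,-1,0)}" by auto
  from kept have "\<exists>ng sw. f = grid_map ng sw w1 w2"
    by (rule orientation_preserving_grid_map) (rule fx)
  then show ?thesis using that adm by blast
qed

end

section \<open>The lattice of admissible translations\<close>

context satin_split
begin

lemma p_q_same_parity: "even p \<longleftrightarrow> even q"
  using even_split pq_eq by (cases "even n") auto

lemma cofactors:
  obtains c1 c2 where "s - 1 = q * c1" "s + 1 = p * c2" "even n \<longrightarrow> odd c1 \<and> odd c2"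
proof -
  obtain c1 where c1: "s - 1 = q * c1" using q_dvd by auto
  obtain c2 where c2: "s + 1 = p * c2" using p_dvd by auto
  have "even n \<longrightarrow> odd c1 \<and> odd c2" using even_split c1 c2 q_pos p_pos by auto
  then show ?thesis using that c1 c2 by blast
qed

text \<open>Coordinates of an admissible translation with respect to the rhombic lattice
  spanned by (p,p)/2 + (q,-q)/2 and (p,p)/2 - (q,-q)/2.\<close>
lemma admissible_coords:
  assumes "admissible a b"
  obtains A B where "a + b = p * A" "a - b = q * B" "even (A + B)"
proof -
  obtain c1 c2 where c1: "s - 1 = q * c1" and c2: "s + 1 = p * c2"
    and odd_c: "even n \<longrightarrow> odd c1 \<and> odd c2" by (rule cofactors)
  obtain k where k: "a - b * s = n * k" using assms unfolding admissible_def by auto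
  define A where "A = q * k + b * c2"
  define B where "B = p * k + b * c1"
  have eA: "a + b = p * A" unfolding A_def using k c2 pq_eq by algebra
  have eB: "a - b = q * B" unfolding B_def using k c1 pq_eq by algebra
  have "even (A + B)"
  proof (cases "even n")
    case True
    then have "odd c1" "odd c2" "even p" "even q" using odd_c even_split by auto
    then show ?thesis unfolding A_def B_def by simp
  next
    case False
    then have "odd p" "odd q" using pq_eq by auto
    moreover have "p * A + q * B = 2 * a" using eA eB by algebra
    then have "even (p * A + q * B)" by simp
    ultimately show ?thesis by simp
  qed
  then show ?thesis using that eA eB by blast
qed

lemma admissible_of_coords:
  assumes eA: "a + b = p * A" and eB: "a - b = q * B" and ev: "even (A + B)"
  shows "admissible a b"
proof -
  obtain c1 c2 where c1: "s - 1 = q * c1" and c2: "s + 1 = p * c2"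
    and odd_c: "even n \<longrightarrow> odd c1 \<and> odd c2" by (rule cofactors)
  have twice: "2 * (a - b * s) = n * (B * c2 - A * c1)"
  proof -
    have "2 * (a - b * s) = (a + b) * (1 - s) + (a - b) * (1 + s)" by (simp add: algebra_simps)
    also have "\<dots> = p * A * (- (q * c1)) + q * B * (p * c2)" using eA eB c1 c2 by algebra
    also have "\<dots> = n * (B * c2 - A * c1)" using pq_eq by (simp add: algebra_simps)
    finally show ?thesis .
  qed
  show ?thesis
  proof (cases "even n")
    case True
    then have "even (B * c2 - A * c1)" using odd_c ev by auto
    then obtain m where "B * c2 - A * c1 = 2 * m" by (rule evenE)
    then have "a - b * s = n * m" using twice by simp
    then show ?thesis unfolding admissible_def by simp
  next
    case False
    then have "coprime n 2" by (simp add: coprime_commute)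
    moreover have "n dvd 2 * (a - b * s)" using twice by simp
    ultimately show ?thesis unfolding admissible_def by (meson coprime_dvd_mult_right_iff)
  qed
qed

lemma admissible_exists:
  assumes "even (A + B)"
  obtains a b where "a + b = p * A" "a - b = q * B" "admissible a b"
proof -
  have e: "even (p*A + q*B)" "even (p*A - q*B)" using assms p_q_same_parity by auto
  define a where "a = (p*A + q*B) div 2"
  define b where "b = (p*A - q*B) div 2"
  have "2 * a = p*A + q*B" "2 * b = p*A - q*B" unfolding a_def b_def using e by simp_all
  then have "a + b = p * A" "a - b = q * B" by algebra+
  then show ?thesis using that admissible_of_coords assms by blast
qed

lemma coprime_p_q_odd:
  assumes "odd n"
  shows "coprime p q"
proof (rule coprimeI)
  fix d assume dp: "d dvd p" and dq: "d dvd q"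
  obtain c1 c2 where c1: "s - 1 = q * c1" and c2: "s + 1 = p * c2" by (rule cofactors)
  have "d dvd (s + 1) - (s - 1)" using dp dq c1 c2 by (simp add: dvd_diff)
  then have "d dvd 2" by simp
  moreover have "odd d" using assms dp pq_eq by (metis dvd_mult2 dvd_trans)
  ultimately show "is_unit d" by (metis coprime_common_divisor coprime_commute odd_one
        coprime_right_2_iff_odd dvd_refl)
qed

lemma half_factors_even:
  assumes "even n"
  shows "p = 2 * (p div 2)" "q = 2 * (q div 2)"
    "coprime (p div 2) (q div 2)" "odd (p div 2 + q div 2)"
proof -
  obtain c1 c2 where c1: "s - 1 = q * c1" and c2: "s + 1 = p * c2"
    and odd_c: "even n \<longrightarrow> odd c1 \<and> odd c2" by (rule cofactors)
  show pp: "p = 2 * (p div 2)" and qq: "q = 2 * (q div 2)" using even_split assms by simp_all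
  have key: "(p div 2) * c2 - (q div 2) * c1 = 1"
  proof -
    have "2 * ((p div 2) * c2 - (q div 2) * c1) = (s + 1) - (s - 1)"
      using c1 c2 pp qq by algebra
    then show ?thesis by simp
  qed
  show "coprime (p div 2) (q div 2)"
  proof (rule coprimeI)
    fix d assume "d dvd p div 2" "d dvd q div 2"
    then have "d dvd (p div 2) * c2 - (q div 2) * c1" by (simp add: dvd_diff)
    then show "is_unit d" using key by simp
  qed
  show "odd (p div 2 + q div 2)"
  proof
    assume "even (p div 2 + q div 2)"
    then have "even (p div 2) = even (q div 2)" by simp
    then have "even ((p div 2) * c2 - (q div 2) * c1)" using odd_c assms by simp
    then show False using key by simp
  qed
qed

end

section \<open>The symmetry group is of type cmm\<close>

definition std_map :: "bool \<Rightarrow> bool \<Rightarrow> int \<Rightarrow> int \<Rightarrow> pt \<Rightarrow> pt" where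
  "std_map e1 e2 A B =
     (\<lambda>x. ((if e1 then - fst x else fst x) + of_int A, (if e2 then - snd x else snd x) + of_int B))"

lemma std_cmm_eq: "std_cmm = {g. \<exists>e1 e2 A B. even (A + B) \<and> g = std_map e1 e2 A B}"
  unfolding std_cmm_def std_map_def by blast

context satin_split
begin

text \<open>The affine change of coordinates taking the rhombic lattice of admissible translations
  (with origin at the corner (1/2,1/2) of the diagonals) to the standard cmm lattice.\<close>
definition to_std :: "pt \<Rightarrow> pt" where
  "to_std x = ((fst x + snd x - 1) / of_int p, (fst x - snd x) / of_int q)"

definition from_std :: "pt \<Rightarrow> pt" where
  "from_std y = ((of_int p * fst y + of_int q * snd y + 1) / 2,
                 (of_int p * fst y - of_int q * snd y + 1) / 2)"

lemma p_q_nonzero: "(of_int p :: real) \<noteq> 0" "(of_int q :: real) \<noteq> 0"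
  using p_pos q_pos by simp_all

lemma inv_to_std: "inv to_std = from_std"
proof (rule inv_equality)
  fix x show "from_std (to_std x) = x"
    using p_q_nonzero unfolding to_std_def from_std_def by (cases x) (simp add: field_simps)
next
  fix y show "to_std (from_std y) = y"
    using p_q_nonzero unfolding to_std_def from_std_def by (cases y) (simp add: field_simps)
qed

lemma affine_to_std: "affine_bij to_std"
  unfolding affine_bij_def
proof (intro exI conjI)
  show "1 / of_int p * (- 1 / of_int q) - 1 / of_int p * (1 / of_int q) \<noteq> (0::real)"
    using p_q_nonzero by (simp add: field_simps)
  show "to_std = (\<lambda>x. (1 / of_int p * fst x + 1 / of_int p * snd x + (- 1 / of_int p),
                       1 / of_int q * fst x + (- 1 / of_int q) * snd x + 0))"
    unfolding to_std_def using p_q_nonzero by (intro ext) (simp add: field_simps)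
qed

lemma conjugate_std_map:
  assumes "a + b = p * A" "a - b = q * B"
  shows "from_std \<circ> std_map e1 e2 A B \<circ> to_std = grid_map e1 (e1 \<noteq> e2) a b"
proof -
  have "2 * a = p * A + q * B" "2 * b = p * A - q * B" using assms by algebra+
  then have "real_of_int (2 * a) = real_of_int (p * A + q * B)"
    "real_of_int (2 * b) = real_of_int (p * A - q * B)" by simp_all
  then have r: "real_of_int a = (of_int p * of_int A + of_int q * of_int B) / 2"
    "real_of_int b = (of_int p * of_int A - of_int q * of_int B) / 2" by simp_all
  show ?thesis
  proof (rule ext)
    fix x :: pt
    show "(from_std \<circ> std_map e1 e2 A B \<circ> to_std) x = grid_map e1 (e1 \<noteq> e2) a b x"
      using p_q_nonzero unfolding grid_map_def r
      by (cases x; cases e1; cases e2) (simp_all add: from_std_def std_map_def to_std_def field_simps)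
  qed
qed

theorem type_cmm_G1: "type_cmm (G1 P)"
  unfolding type_cmm_def
proof (intro exI conjI)
  show "affine_bij to_std" by (rule affine_to_std)
  show "G1 P = (\<lambda>g. inv to_std \<circ> g \<circ> to_std) ` std_cmm"
  proof
    show "G1 P \<subseteq> (\<lambda>g. inv to_std \<circ> g \<circ> to_std) ` std_cmm"
    proof
      fix f assume "f \<in> G1 P"
      then obtain ng sw a b where adm: "admissible a b" and f: "f = grid_map ng sw a b"
        by (rule G1_grid_map)
      obtain A B where AB: "a + b = p * A" "a - b = q * B" and ev: "even (A + B)"
        using admissible_coords[OF adm] by blast
      have "f = from_std \<circ> std_map ng (ng \<noteq> sw) A B \<circ> to_std"
        using conjugate_std_map[OF AB, of ng "ng \<noteq> sw"] f by (cases ng; cases sw) simp_all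
      moreover have "std_map ng (ng \<noteq> sw) A B \<in> std_cmm" using ev std_cmm_eq by blast
      ultimately show "f \<in> (\<lambda>g. inv to_std \<circ> g \<circ> to_std) ` std_cmm" unfolding inv_to_std by blast
    qed
    show "(\<lambda>g. inv to_std \<circ> g \<circ> to_std) ` std_cmm \<subseteq> G1 P"
    proof
      fix f assume "f \<in> (\<lambda>g. inv to_std \<circ> g \<circ> to_std) ` std_cmm"
      then obtain e1 e2 A B where ev: "even (A + B)" and f: "f = from_std \<circ> std_map e1 e2 A B \<circ> to_std"
        unfolding inv_to_std std_cmm_eq by blast
      obtain a b where AB: "a + b = p * A" "a - b = q * B" and adm: "admissible a b"
        using admissible_exists[OF ev] by blast
      show "f \<in> G1 P" using f conjugate_std_map[OF AB] grid_map_in_G1[OF adm] by simp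
    qed
  qed
qed

end

section \<open>Diagonal lines and glide-reflections\<close>

definition diag_line :: "real \<Rightarrow> pt set" where "diag_line c = {x. fst x - snd x = c}"
definition antidiag_line :: "real \<Rightarrow> pt set" where "antidiag_line c = {x. fst x + snd x = c}"

lemma diag_line_eq_iff: "diag_line c = diag_line c' \<longleftrightarrow> c = c'"
proof
  assume h: "diag_line c = diag_line c'"
  have "(c,0) \<in> diag_line c" by (simp add: diag_line_def)
  then have "(c,0) \<in> diag_line c'" using h by simp
  then show "c = c'" unfolding diag_line_def by simp
qed simp

lemma antidiag_line_eq_iff: "antidiag_line c = antidiag_line c' \<longleftrightarrow> c = c'"
proof
  assume h: "antidiag_line c = antidiag_line c'"
  have "(c,0) \<in> antidiag_line c" by (simp add: antidiag_line_def)
  then have "(c,0) \<in> antidiag_line c'" using h by simp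
  then show "c = c'" unfolding antidiag_line_def by simp
qed simp

lemma diag_ne_antidiag: "diag_line c \<noteq> antidiag_line c'"
proof
  assume h: "diag_line c = antidiag_line c'"
  have "(c,0) \<in> diag_line c" "(c+1,1) \<in> diag_line c" by (simp_all add: diag_line_def)
  then show False using h unfolding antidiag_line_def by auto
qed

lemma line_thru_diag:
  assumes "fst u = snd u" "fst u \<noteq> 0"
  shows "line_thru p u = diag_line (fst p - snd p)"
proof
  show "line_thru p u \<subseteq> diag_line (fst p - snd p)"
    unfolding line_thru_def diag_line_def using assms by auto
  show "diag_line (fst p - snd p) \<subseteq> line_thru p u"
  proof
    fix x assume "x \<in> diag_line (fst p - snd p)"
    then have "x = p + ((fst x - fst p) / fst u) *\<^sub>R u"
      using assms unfolding diag_line_def by (simp add: prod_eq_iff)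
    then show "x \<in> line_thru p u" unfolding line_thru_def by blast
  qed
qed

lemma line_thru_antidiag:
  assumes "fst u = - snd u" "fst u \<noteq> 0"
  shows "line_thru p u = antidiag_line (fst p + snd p)"
proof
  show "line_thru p u \<subseteq> antidiag_line (fst p + snd p)"
    unfolding line_thru_def antidiag_line_def using assms by auto
  show "antidiag_line (fst p + snd p) \<subseteq> line_thru p u"
  proof
    fix x assume "x \<in> antidiag_line (fst p + snd p)"
    then have "x = p + ((fst x - fst p) / fst u) *\<^sub>R u"
      using assms unfolding antidiag_line_def by (simp add: prod_eq_iff)
    then show "x \<in> line_thru p u" unfolding line_thru_def by blast
  qed
qed

definition diag_unit :: real where "diag_unit = sqrt 2 / 2"

lemma diag_unit_sq: "diag_unit * diag_unit = 1/2"
  unfolding diag_unit_def by (simp add: field_simps)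

lemma diag_unit_pos: "diag_unit > 0" unfolding diag_unit_def by simp

lemma diag_unit_dotp:
  "dotp (diag_unit, diag_unit) (diag_unit, diag_unit) = 1"
  "dotp (diag_unit, -diag_unit) (diag_unit, -diag_unit) = 1"
  using diag_unit_sq by (simp_all add: dotp_def)

lemma line_thru_diag_unit:
  "line_thru (c,0) (diag_unit, diag_unit) = diag_line c"
  "line_thru (c,0) (diag_unit, -diag_unit) = antidiag_line c"
  using line_thru_diag[of "(diag_unit, diag_unit)"] line_thru_antidiag[of "(diag_unit, -diag_unit)"]
    diag_unit_pos by simp_all

lemma reflect_diag: "reflect_in (c,0) (diag_unit, diag_unit) x = (c + snd x, fst x - c)"
proof -
  have "2 * ((fst x - c) * diag_unit + snd x * diag_unit) * diag_unit
      = ((fst x - c) + snd x) * (2 * (diag_unit * diag_unit))"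
    by (simp add: algebra_simps)
  then show ?thesis unfolding reflect_in_def dotp_def diag_unit_sq by (simp add: prod_eq_iff algebra_simps)
qed

lemma reflect_antidiag: "reflect_in (c,0) (diag_unit, -diag_unit) x = (c - snd x, c - fst x)"
proof -
  have "2 * ((fst x - c) * diag_unit + snd x * - diag_unit) * diag_unit
      = ((fst x - c) - snd x) * (2 * (diag_unit * diag_unit))"
    by (simp add: algebra_simps)
  then show ?thesis unfolding reflect_in_def dotp_def diag_unit_sq by (simp add: prod_eq_iff algebra_simps)
qed

lemma grid_map_glide_direction:
  assumes eq: "grid_map ng sw a b = (\<lambda>x. reflect_in p u x + d *\<^sub>R u)" and uu: "dotp u u = 1"
  shows "sw" "fst u \<noteq> 0" "if ng then fst u = - snd u else fst u = snd u"
proof -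
  obtain u1 u2 where u: "u = (u1,u2)" by (cases u)
  have uu': "u1 * u1 + u2 * u2 = 1" using uu u by (simp add: dotp_def)
  have diff: "grid_map ng sw a b x - grid_map ng sw a b y = (2 * dotp (x - y) u) *\<^sub>R u - (x - y)" for x y
    unfolding eq reflect_in_def dotp_def by (simp add: prod_eq_iff algebra_simps)
  have e1: "grid_map ng sw a b (1,0) - grid_map ng sw a b (0,0) = (2 * u1 * u1 - 1, 2 * u1 * u2)"
    using diff[of "(1,0)" "(0,0)"] u by (simp add: dotp_def)
  have e2: "grid_map ng sw a b (0,1) - grid_map ng sw a b (0,0) = (2 * u1 * u2, 2 * u2 * u2 - 1)"
    using diff[of "(0,1)" "(0,0)"] u by (simp add: dotp_def)
  show sw: "sw"
  proof (rule ccontr)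
    assume "\<not> sw"
    then show False using e1 e2 uu' by (cases ng) (simp_all add: grid_map_def)
  qed
  have sq: "u1 * u1 = 1/2" "u2 * u2 = 1/2" using e1 e2 sw by (cases ng; simp add: grid_map_def)+
  then show "fst u \<noteq> 0" using u by auto
  show "if ng then fst u = - snd u else fst u = snd u"
  proof (cases ng)
    case True
    then have "2 * u1 * u2 = -1" using e1 sw by (simp add: grid_map_def)
    then have "(u1 + u2) * (u1 + u2) = 0" using sq by (simp add: algebra_simps)
    then show ?thesis using True u by (simp add: add_eq_0_iff2)
  next
    case False
    then have "2 * u1 * u2 = 1" using e1 sw by (simp add: grid_map_def)
    then have "(u1 - u2) * (u1 - u2) = 0" using sq by (simp add: algebra_simps)
    then show ?thesis using False u by simp
  qed
qed

lemma glide_base_point: "reflect_in p u p + d *\<^sub>R u = p + d *\<^sub>R u"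
  unfolding reflect_in_def dotp_def by (simp add: prod_eq_iff)

lemma grid_map_glide_diag_axis:
  assumes eq: "grid_map ng sw a b = (\<lambda>x. reflect_in p u x + d *\<^sub>R u)" and uu: "dotp u u = 1"
    and ng: "\<not> ng"
  shows "line_thru p u = diag_line (of_int (a - b) / 2)" "d = 0 \<Longrightarrow> a + b = 0"
proof -
  note dir = grid_map_glide_direction[OF eq uu]
  obtain u1 u2 where u: "u = (u1,u2)" by (cases u)
  obtain p1 p2 where p: "p = (p1,p2)" by (cases p)
  have "u1 = u2" using dir ng u by simp
  moreover have "p2 + a = p1 + d * u1" "p1 + b = p2 + d * u2"
    using fun_cong[OF eq, of p] glide_base_point dir(1) ng p u by (simp_all add: grid_map_def)
  ultimately have c: "p1 - p2 = of_int (a - b) / 2" and "d = 0 \<Longrightarrow> a + b = 0" by auto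
  then show "d = 0 \<Longrightarrow> a + b = 0" by blast
  have "line_thru p u = diag_line (p1 - p2)"
    using line_thru_diag[of u p] dir(2) \<open>u1 = u2\<close> u p by simp
  then show "line_thru p u = diag_line (of_int (a - b) / 2)" by (simp only: c)
qed

lemma grid_map_glide_antidiag_axis:
  assumes eq: "grid_map ng sw a b = (\<lambda>x. reflect_in p u x + d *\<^sub>R u)" and uu: "dotp u u = 1"
    and ng: "ng"
  shows "line_thru p u = antidiag_line (1 + of_int (a + b) / 2)" "d = 0 \<Longrightarrow> a = b"
proof -
  note dir = grid_map_glide_direction[OF eq uu]
  obtain u1 u2 where u: "u = (u1,u2)" by (cases u)
  obtain p1 p2 where p: "p = (p1,p2)" by (cases p)
  have "u1 = - u2" using dir ng u by simp
  moreover have "1 - p2 + a = p1 + d * u1" "1 - p1 + b = p2 + d * u2"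
    using fun_cong[OF eq, of p] glide_base_point dir(1) ng p u by (simp_all add: grid_map_def)
  ultimately have e: "1 - p2 + a = p1 - d * u2" "1 - p1 + b = p2 + d * u2" by simp_all
  then have "p1 + p2 = 1 + (of_int a + of_int b) / 2" by argo
  then have c: "p1 + p2 = 1 + of_int (a + b) / 2" by simp
  show "d = 0 \<Longrightarrow> a = b"
  proof -
    assume "d = 0"
    then have "1 - p2 + a = p1" "1 - p1 + b = p2" using e by simp_all
    then have "real_of_int a = of_int b" by argo
    then show "a = b" by simp
  qed
  have "line_thru p u = antidiag_line (p1 + p2)"
    using line_thru_antidiag[of u p] dir(2) \<open>u1 = - u2\<close> u p by simp
  then show "line_thru p u = antidiag_line (1 + of_int (a + b) / 2)" by (simp only: c)
qed

lemma mirror_is_glide: "mirror_axis_of f L \<Longrightarrow> glide_refl_axis f L"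
  unfolding mirror_axis_of_def glide_refl_axis_def
  by (metis (no_types, lifting) add.right_neutral scale_zero_left)

section \<open>The glide-reflection axes of a satin\<close>

context satin_split
begin

lemma glide_axis_cases:
  assumes "f \<in> G1 P" "glide_refl_axis f L"
  shows "swaps_strands f"
    "(\<exists>a b. admissible a b \<and> L = diag_line (of_int (a - b) / 2)) \<or>
     (\<exists>a b. admissible a b \<and> L = antidiag_line (1 + of_int (a + b) / 2))"
proof -
  obtain ng sw a b where adm: "admissible a b" and f: "f = grid_map ng sw a b"
    by (rule G1_grid_map[OF assms(1)])
  obtain p u d where uu: "dotp u u = 1" and L: "L = line_thru p u"
    and fe: "f = (\<lambda>x. reflect_in p u x + d *\<^sub>R u)"
    using assms(2) unfolding glide_refl_axis_def by blast
  have eq: "grid_map ng sw a b = (\<lambda>x. reflect_in p u x + d *\<^sub>R u)" using f fe by simp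
  show "swaps_strands f" using grid_map_glide_direction(1)[OF eq uu] f swaps_strands_grid_map by simp
  show "(\<exists>a b. admissible a b \<and> L = diag_line (of_int (a - b) / 2)) \<or>
        (\<exists>a b. admissible a b \<and> L = antidiag_line (1 + of_int (a + b) / 2))"
  proof (cases ng)
    case False
    then have "L = diag_line (of_int (a - b) / 2)" using grid_map_glide_diag_axis(1)[OF eq uu False] L by simp
    then show ?thesis using adm by blast
  next
    case True
    then have "L = antidiag_line (1 + of_int (a + b) / 2)" using grid_map_glide_antidiag_axis(1)[OF eq uu True] L by simp
    then show ?thesis using adm by blast
  qed
qed

lemma glide_axis_diagonal:
  assumes "f \<in> G1 P" "glide_refl_axis f L"
  shows "diagonal_line L"
proof -
  obtain ng sw a b where "admissible a b" and f: "f = grid_map ng sw a b"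
    by (rule G1_grid_map[OF assms(1)])
  obtain p u d where uu: "dotp u u = 1" and L: "L = line_thru p u"
    and fe: "f = (\<lambda>x. reflect_in p u x + d *\<^sub>R u)"
    using assms(2) unfolding glide_refl_axis_def by blast
  have eq: "grid_map ng sw a b = (\<lambda>x. reflect_in p u x + d *\<^sub>R u)" using f fe by simp
  have "\<bar>fst u\<bar> = \<bar>snd u\<bar>" using grid_map_glide_direction(3)[OF eq uu] by (auto split: if_splits)
  then show ?thesis unfolding diagonal_line_def using uu L by blast
qed

lemma mirror_axis_cases:
  assumes "f \<in> G1 P" "mirror_axis_of f L"
  shows "(\<exists>a. admissible a (-a) \<and> L = diag_line (of_int a)) \<or>
         (\<exists>a. admissible a a \<and> L = antidiag_line (1 + of_int a))"
proof -
  obtain ng sw a b where adm: "admissible a b" and f: "f = grid_map ng sw a b"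
    by (rule G1_grid_map[OF assms(1)])
  obtain p u where uu: "dotp u u = 1" and L: "L = line_thru p u" and fe: "f = reflect_in p u"
    using assms(2) unfolding mirror_axis_of_def by blast
  have eq: "grid_map ng sw a b = (\<lambda>x. reflect_in p u x + 0 *\<^sub>R u)" using f fe by (simp add: fun_eq_iff)
  show ?thesis
  proof (cases ng)
    case False
    have "b = -a" using grid_map_glide_diag_axis(2)[OF eq uu False] by simp
    moreover have "L = diag_line (of_int (a - b) / 2)" using grid_map_glide_diag_axis(1)[OF eq uu False] L by simp
    ultimately have "L = diag_line (of_int a)" by simp
    then show ?thesis using adm \<open>b = -a\<close> by blast
  next
    case True
    have "a = b" using grid_map_glide_antidiag_axis(2)[OF eq uu True] by simp
    moreover have "L = antidiag_line (1 + of_int (a + b) / 2)"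
      using grid_map_glide_antidiag_axis(1)[OF eq uu True] L by simp
    ultimately have "L = antidiag_line (1 + of_int a)" by simp
    then show ?thesis using adm \<open>a = b\<close> by blast
  qed
qed

lemma mirror_diag_of_admissible:
  assumes "admissible a (-a)"
  shows "mirror_axis (G1 P) (diag_line (of_int a))"
proof -
  have "grid_map False True a (-a) = reflect_in (of_int a, 0) (diag_unit, diag_unit)"
    by (simp add: fun_eq_iff reflect_diag grid_map_def)
  then have "mirror_axis_of (grid_map False True a (-a)) (diag_line (of_int a))"
    unfolding mirror_axis_of_def using diag_unit_dotp(1) line_thru_diag_unit(1)[symmetric]
    by (intro exI[of _ "(of_int a, 0)"] exI[of _ "(diag_unit, diag_unit)"]) simp
  then show ?thesis unfolding mirror_axis_def using grid_map_in_G1[OF assms] by blast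
qed

lemma mirror_antidiag_of_admissible:
  assumes "admissible a a"
  shows "mirror_axis (G1 P) (antidiag_line (1 + of_int a))"
proof -
  have "grid_map True True a a = reflect_in (1 + of_int a, 0) (diag_unit, -diag_unit)"
    by (simp add: fun_eq_iff reflect_antidiag grid_map_def)
  then have "mirror_axis_of (grid_map True True a a) (antidiag_line (1 + of_int a))"
    unfolding mirror_axis_of_def using diag_unit_dotp(2) line_thru_diag_unit(2)[symmetric]
    by (intro exI[of _ "(1 + of_int a, 0)"] exI[of _ "(diag_unit, -diag_unit)"]) simp
  then show ?thesis unfolding mirror_axis_def using grid_map_in_G1[OF assms] by blast
qed

lemma glide_diag_of_admissible:
  assumes "admissible a b"
  shows "\<exists>f\<in>G1 P. glide_refl_axis f (diag_line (of_int (a - b) / 2))"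
proof -
  define c where "c = (of_int (a - b) / 2 :: real)"
  define d where "d = of_int (a + b) * diag_unit"
  have glide: "d *\<^sub>R (diag_unit, diag_unit) = (of_int (a + b) / 2, of_int (a + b) / 2)"
    unfolding d_def using diag_unit_sq by (simp add: mult.assoc)
  have "grid_map False True a b = (\<lambda>x. reflect_in (c, 0) (diag_unit, diag_unit) x + d *\<^sub>R (diag_unit, diag_unit))"
    unfolding glide reflect_diag c_def by (simp add: fun_eq_iff grid_map_def field_simps)
  then have "glide_refl_axis (grid_map False True a b) (diag_line c)"
    unfolding glide_refl_axis_def using diag_unit_dotp(1) line_thru_diag_unit(1)[symmetric]
    by (intro exI[of _ "(c, 0)"] exI[of _ "(diag_unit, diag_unit)"] exI[of _ d]) simp
  then show ?thesis using grid_map_in_G1[OF assms] c_def by blast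
qed

lemma glide_antidiag_of_admissible:
  assumes "admissible a b"
  shows "\<exists>f\<in>G1 P. glide_refl_axis f (antidiag_line (1 + of_int (a + b) / 2))"
proof -
  define c where "c = (1 + of_int (a + b) / 2 :: real)"
  define d where "d = of_int (a - b) * diag_unit"
  have glide: "d *\<^sub>R (diag_unit, - diag_unit) = (of_int (a - b) / 2, - (of_int (a - b) / 2))"
    unfolding d_def using diag_unit_sq by (simp add: mult.assoc)
  have "grid_map True True a b = (\<lambda>x. reflect_in (c, 0) (diag_unit, -diag_unit) x + d *\<^sub>R (diag_unit, -diag_unit))"
    unfolding glide reflect_antidiag c_def by (simp add: fun_eq_iff grid_map_def field_simps)
  then have "glide_refl_axis (grid_map True True a b) (antidiag_line c)"
    unfolding glide_refl_axis_def using diag_unit_dotp(2) line_thru_diag_unit(2)[symmetric]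
    by (intro exI[of _ "(c, 0)"] exI[of _ "(diag_unit, -diag_unit)"] exI[of _ d]) simp
  then show ?thesis using grid_map_in_G1[OF assms] c_def by blast
qed

lemma glide_diag_iff:
  "(\<exists>f\<in>G1 P. glide_refl_axis f (diag_line c)) \<longleftrightarrow> (\<exists>Y. c = of_int (q * Y) / 2)"
proof
  assume "\<exists>f\<in>G1 P. glide_refl_axis f (diag_line c)"
  then obtain f where f: "f \<in> G1 P" "glide_refl_axis f (diag_line c)" by blast
  obtain a b where adm: "admissible a b" and c: "c = of_int (a - b) / 2"
    using glide_axis_cases(2)[OF f] by (auto simp: diag_line_eq_iff diag_ne_antidiag)
  obtain A B where "a - b = q * B" using admissible_coords[OF adm] by blast
  then show "\<exists>Y. c = of_int (q * Y) / 2" using c by auto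
next
  assume "\<exists>Y. c = of_int (q * Y) / 2"
  then obtain Y where c: "c = of_int (q * Y) / 2" by blast
  obtain a b where ab: "a + b = p * Y" "a - b = q * Y" and adm: "admissible a b"
    by (rule admissible_exists[of Y Y]) simp
  have "diag_line (of_int (a - b) / 2) = diag_line c" unfolding c using ab(2) by simp
  then show "\<exists>f\<in>G1 P. glide_refl_axis f (diag_line c)" using glide_diag_of_admissible[OF adm] by simp
qed

lemma glide_antidiag_iff:
  "(\<exists>f\<in>G1 P. glide_refl_axis f (antidiag_line c)) \<longleftrightarrow> (\<exists>X. c = 1 + of_int (p * X) / 2)"
proof
  assume "\<exists>f\<in>G1 P. glide_refl_axis f (antidiag_line c)"
  then obtain f where f: "f \<in> G1 P" "glide_refl_axis f (antidiag_line c)" by blast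
  obtain a b where adm: "admissible a b" and c: "c = 1 + of_int (a + b) / 2"
    using glide_axis_cases(2)[OF f] by (auto simp: antidiag_line_eq_iff diag_ne_antidiag[symmetric])
  obtain A B where "a + b = p * A" using admissible_coords[OF adm] by blast
  then show "\<exists>X. c = 1 + of_int (p * X) / 2" using c by auto
next
  assume "\<exists>X. c = 1 + of_int (p * X) / 2"
  then obtain X where c: "c = 1 + of_int (p * X) / 2" by blast
  obtain a b where ab: "a + b = p * X" "a - b = q * X" and adm: "admissible a b"
    by (rule admissible_exists[of X X]) simp
  have "antidiag_line (1 + of_int (a + b) / 2) = antidiag_line c" unfolding c using ab(1) by simp
  then show "\<exists>f\<in>G1 P. glide_refl_axis f (antidiag_line c)"
    using glide_antidiag_of_admissible[OF adm] by simp
qed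

lemma mirror_diag_iff:
  "mirror_axis (G1 P) (diag_line c) \<longleftrightarrow> (\<exists>Y. even Y \<and> c = of_int (q * Y) / 2)"
proof
  assume "mirror_axis (G1 P) (diag_line c)"
  then obtain f where f: "f \<in> G1 P" "mirror_axis_of f (diag_line c)" unfolding mirror_axis_def by blast
  obtain a where adm: "admissible a (-a)" and c: "c = of_int a"
    using mirror_axis_cases[OF f] by (auto simp: diag_line_eq_iff diag_ne_antidiag)
  obtain A B where "a + - a = p * A" "a - - a = q * B" "even (A + B)"
    using admissible_coords[OF adm] by blast
  then have "even B" "2 * a = q * B" using p_pos by auto
  moreover from \<open>2 * a = q * B\<close> have "real_of_int (2 * a) = of_int (q * B)" by simp
  ultimately show "\<exists>Y. even Y \<and> c = of_int (q * Y) / 2" using c by auto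
next
  assume "\<exists>Y. even Y \<and> c = of_int (q * Y) / 2"
  then obtain Y where "even Y" and cY: "c = of_int (q * Y) / 2" by blast
  then obtain k where "Y = 2 * k" by (auto elim!: evenE)
  with cY have c: "c = of_int (q * k)" by simp
  have "admissible (q * k) (- (q * k))" by (rule admissible_of_coords[of _ _ 0 "2 * k"]) simp_all
  then show "mirror_axis (G1 P) (diag_line c)" unfolding c by (rule mirror_diag_of_admissible)
qed

lemma mirror_antidiag_iff:
  "mirror_axis (G1 P) (antidiag_line c) \<longleftrightarrow> (\<exists>X. even X \<and> c = 1 + of_int (p * X) / 2)"
proof
  assume "mirror_axis (G1 P) (antidiag_line c)"
  then obtain f where f: "f \<in> G1 P" "mirror_axis_of f (antidiag_line c)" unfolding mirror_axis_def by blast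
  obtain a where adm: "admissible a a" and c: "c = 1 + of_int a"
    using mirror_axis_cases[OF f] by (auto simp: antidiag_line_eq_iff diag_ne_antidiag[symmetric])
  obtain A B where "a + a = p * A" "a - a = q * B" "even (A + B)"
    using admissible_coords[OF adm] by blast
  then have "even A" "2 * a = p * A" using q_pos by auto
  moreover from \<open>2 * a = p * A\<close> have "real_of_int (2 * a) = of_int (p * A)" by simp
  ultimately show "\<exists>X. even X \<and> c = 1 + of_int (p * X) / 2" using c by auto
next
  assume "\<exists>X. even X \<and> c = 1 + of_int (p * X) / 2"
  then obtain X where "even X" and cX: "c = 1 + of_int (p * X) / 2" by blast
  then obtain k where "X = 2 * k" by (auto elim!: evenE)
  with cX have c: "c = 1 + of_int (p * k)" by simp
  have "admissible (p * k) (p * k)" by (rule admissible_of_coords[of _ _ "2 * k" 0]) simp_all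
  then show "mirror_axis (G1 P) (antidiag_line c)" unfolding c by (rule mirror_antidiag_of_admissible)
qed

text \<open>Since q > 0 (resp. p > 0), the lattice coordinate of an axis is unique, so the
  axes between the mirrors are those with odd coordinate.\<close>
lemma between_diag_iff:
  "between_glide_axis (G1 P) (diag_line c) \<longleftrightarrow> (\<exists>Y. odd Y \<and> c = of_int (q * Y) / 2)"
proof -
  have uniq: "Y = Y'" if "of_int (q * Y) / 2 = (of_int (q * Y') / 2 :: real)" for Y Y'
    using that q_pos by simp
  show ?thesis unfolding between_glide_axis_def glide_diag_iff mirror_diag_iff
    using uniq by blast
qed

lemma between_antidiag_iff:
  "between_glide_axis (G1 P) (antidiag_line c) \<longleftrightarrow> (\<exists>X. odd X \<and> c = 1 + of_int (p * X) / 2)"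
proof -
  have uniq: "X = X'" if "1 + of_int (p * X) / 2 = (1 + of_int (p * X') / 2 :: real)" for X X'
    using that p_pos by simp
  show ?thesis unfolding between_glide_axis_def glide_antidiag_iff mirror_antidiag_iff
    using uniq by blast
qed

lemma between_glide_axis_iff:
  "between_glide_axis (G1 P) L \<longleftrightarrow>
     (\<exists>Y. odd Y \<and> L = diag_line (of_int (q * Y) / 2)) \<or>
     (\<exists>X. odd X \<and> L = antidiag_line (1 + of_int (p * X) / 2))"
proof
  assume between: "between_glide_axis (G1 P) L"
  then obtain f where f: "f \<in> G1 P" "glide_refl_axis f L" unfolding between_glide_axis_def by blast
  obtain c where "L = diag_line c \<or> L = antidiag_line c" using glide_axis_cases(2)[OF f] by blast
  then show "(\<exists>Y. odd Y \<and> L = diag_line (of_int (q * Y) / 2)) \<or>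
             (\<exists>X. odd X \<and> L = antidiag_line (1 + of_int (p * X) / 2))"
  proof
    assume L: "L = diag_line c"
    then obtain Y where "odd Y" "c = of_int (q * Y) / 2" using between between_diag_iff by blast
    then show ?thesis using L by blast
  next
    assume L: "L = antidiag_line c"
    then obtain X where "odd X" "c = 1 + of_int (p * X) / 2" using between between_antidiag_iff by blast
    then show ?thesis using L by blast
  qed
next
  assume "(\<exists>Y. odd Y \<and> L = diag_line (of_int (q * Y) / 2)) \<or>
          (\<exists>X. odd X \<and> L = antidiag_line (1 + of_int (p * X) / 2))"
  then show "between_glide_axis (G1 P) L" using between_diag_iff between_antidiag_iff by blast
qed

end

section \<open>Species 28\<close>

context satin_split
begin

text \<open>Glide-reflections interchange the strands and are therefore side-reversing; the
  half-turns do not and are side-preserving; the half-turn about the centre of the dark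
  cell (0,0) is a symmetry.\<close>
theorem species28_satin: "species28 P"
  unfolding species28_def
proof (intro conjI ballI allI impI)
  show "type_cmm (G1 P)" by (rule type_cmm_G1)
next
  fix f L assume "f \<in> G1 P" "mirror_axis_of f L"
  then show "diagonal_line L" using glide_axis_diagonal mirror_is_glide by blast
next
  fix f L assume f: "f \<in> G1 P" and "glide_refl_axis f L \<and> between_glide_axis (G1 P) L"
  then have "swaps_strands f" using glide_axis_cases(1)[OF f] by blast
  then show "f \<notin> H1 P" using symmetry_side_reversal unfolding H1_def by fastforce
next
  fix f c assume f: "f \<in> G1 P" and h: "half_turn f c"
  obtain t where sym: "symmetry P f t" using f G1_def by blast
  have "\<not> swaps_strands f" using h unfolding half_turn_def swaps_strands_def by simp
  then show "f \<in> H1 P" using sym symmetry_side_reversal[OF sym] H1_def by simp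
next
  have "half_turn (grid_map True False 0 0) (cell_centre (0,0))"
    unfolding half_turn_def by (simp add: fun_eq_iff grid_map_def cell_centre_def)
  moreover have "grid_map True False 0 0 \<in> G1 P" by (rule grid_map_in_G1) (simp add: admissible_def)
  ultimately show "\<exists>f\<in>G1 P. \<exists>c\<in>cell_centres. half_turn f c" unfolding cell_centres_def by blast
qed

lemma supp_centre_axes:
  assumes "supp_centre (G1 P) c"
  obtains X Y where "odd X" "odd Y"
    "fst c - snd c = of_int (q * Y) / 2" "fst c + snd c = 1 + of_int (p * X) / 2"
proof -
  obtain L M where L: "between_glide_axis (G1 P) L" and M: "between_glide_axis (G1 P) M"
    and LM: "L \<noteq> M" and cL: "c \<in> L" and cM: "c \<in> M"
    using assms unfolding supp_centre_def by blast
  have "\<exists>X Y. odd X \<and> odd Y \<and> fst c - snd c = of_int (q * Y) / 2 \<and> fst c + snd c = 1 + of_int (p * X) / 2"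
    using L[unfolded between_glide_axis_iff] M[unfolded between_glide_axis_iff]
  proof (elim disjE exE conjE)
    fix Y Y' assume "L = diag_line (of_int (q * Y) / 2)" "M = diag_line (of_int (q * Y') / 2)"
    then show ?thesis using cL cM LM unfolding diag_line_def by auto
  next
    fix Y X assume "odd Y" "L = diag_line (of_int (q * Y) / 2)" "odd X" "M = antidiag_line (1 + of_int (p * X) / 2)"
    then show ?thesis using cL cM unfolding diag_line_def antidiag_line_def by auto
  next
    fix X Y assume "odd X" "L = antidiag_line (1 + of_int (p * X) / 2)" "odd Y" "M = diag_line (of_int (q * Y) / 2)"
    then show ?thesis using cL cM unfolding diag_line_def antidiag_line_def by auto
  next
    fix X X' assume "L = antidiag_line (1 + of_int (p * X) / 2)" "M = antidiag_line (1 + of_int (p * X') / 2)"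
    then show ?thesis using cL cM LM unfolding antidiag_line_def by auto
  qed
  then show ?thesis using that by blast
qed

lemma supp_centre_coords:
  assumes "supp_centre (G1 P) c"
  obtains X Y where "odd X" "odd Y"
    "fst c = of_int (2 + p * X + q * Y) / 4" "snd c = of_int (2 + p * X - q * Y) / 4"
proof -
  obtain X Y where XY: "odd X" "odd Y" and
    e: "fst c - snd c = of_int (q * Y) / 2" "fst c + snd c = 1 + of_int (p * X) / 2"
    by (rule supp_centre_axes[OF assms])
  have "fst c = of_int (2 + p * X + q * Y) / 4" "snd c = of_int (2 + p * X - q * Y) / 4"
    using e by (simp_all only: of_int_add of_int_diff of_int_numeral; argo)+
  then show ?thesis using that XY by blast
qed

end

lemma quarter_in_Ints_iff: "(of_int K / 4 :: real) \<in> \<int> \<longleftrightarrow> 4 dvd K"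
proof
  assume "(of_int K / 4 :: real) \<in> \<int>"
  then obtain z where "(of_int K / 4 :: real) = of_int z" by (auto elim: Ints_cases)
  then have "(of_int K :: real) = of_int (4 * z)" by simp
  then have "K = 4 * z" by (simp only: of_int_eq_iff)
  then show "4 dvd K" by simp
qed auto

lemma four_dvd_odd_pair:
  fixes u w :: int
  assumes "odd u" "odd w"
  shows "(4 dvd (2 + u + w)) \<noteq> (4 dvd (2 + u - w))"
  using assms by presburger

lemma four_dvd_even_pair:
  fixes u w :: int
  assumes "odd (u + w)"
  shows "4 dvd (2 + 2 * u + 2 * w)" "4 dvd (2 + 2 * u - 2 * w)"
  using assms by presburger+

context satin_split
begin

text \<open>For odd n, with p X and q Y odd, exactly one of 2 + p X \<plusminus> q Y is divisible by 4:
  the centre lies on a cell edge but not at a corner.\<close>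
lemma supp_centre_odd:
  assumes "odd n" "supp_centre (G1 P) c"
  shows "c \<in> cell_edge_points - cell_corners"
proof -
  obtain X Y where "odd X" "odd Y" and
    coords: "fst c = of_int (2 + p * X + q * Y) / 4" "snd c = of_int (2 + p * X - q * Y) / 4"
    by (rule supp_centre_coords[OF assms(2)])
  moreover have "odd p" "odd q" using assms(1) pq_eq by auto
  ultimately have "odd (p * X)" "odd (q * Y)" by simp_all
  then have "(4 dvd (2 + p * X + q * Y)) \<noteq> (4 dvd (2 + p * X - q * Y))" by (rule four_dvd_odd_pair)
  moreover have "fst c \<in> \<int> \<longleftrightarrow> 4 dvd (2 + p * X + q * Y)" "snd c \<in> \<int> \<longleftrightarrow> 4 dvd (2 + p * X - q * Y)"
    by (simp_all only: coords quarter_in_Ints_iff)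
  ultimately show ?thesis unfolding cell_edge_points_def cell_corners_def by auto
qed

text \<open>For even n, with p = 2 p', q = 2 q' and p' + q' odd, both 2 + p X \<plusminus> q Y are
  divisible by 4: the centre is a cell corner.\<close>
lemma supp_centre_even:
  assumes "even n" "supp_centre (G1 P) c"
  shows "c \<in> cell_corners"
proof -
  obtain X Y where "odd X" "odd Y" and
    coords: "fst c = of_int (2 + p * X + q * Y) / 4" "snd c = of_int (2 + p * X - q * Y) / 4"
    by (rule supp_centre_coords[OF assms(2)])
  note halves = half_factors_even[OF assms(1)]
  have odd_sum: "odd ((p div 2) * X + (q div 2) * Y)" using halves(4) \<open>odd X\<close> \<open>odd Y\<close> by auto
  have pX: "p * X = 2 * ((p div 2) * X)" and qY: "q * Y = 2 * ((q div 2) * Y)"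
    using halves(1,2) by (metis mult.assoc)+
  have "4 dvd (2 + p * X + q * Y)" "4 dvd (2 + p * X - q * Y)"
    unfolding pX qY using four_dvd_even_pair[OF odd_sum] by simp_all
  then have "fst c \<in> \<int>" "snd c \<in> \<int>" by (simp_all only: coords quarter_in_Ints_iff)
  then show ?thesis unfolding cell_corners_def by simp
qed

end

section \<open>The central rectangle\<close>

lemma par_dist_diag:
  "par_dist (c, 0) (diag_unit, diag_unit) x = diag_unit * \<bar>(fst x - snd x) - c\<bar>"
proof -
  have "(fst x - c) * - diag_unit + snd x * diag_unit = - (diag_unit * ((fst x - snd x) - c))"
    by (simp add: algebra_simps)
  then show ?thesis unfolding par_dist_def dotp_def using diag_unit_pos by (simp add: abs_mult)
qed

lemma par_dist_antidiag:
  "par_dist (c, 0) (diag_unit, - diag_unit) x = diag_unit * \<bar>(fst x + snd x) - c\<bar>"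
proof -
  have "(fst x - c) * diag_unit + snd x * diag_unit = diag_unit * ((fst x + snd x) - c)"
    by (simp add: algebra_simps)
  then show ?thesis unfolding par_dist_def dotp_def using diag_unit_pos by (simp add: abs_mult)
qed

lemma odd_multiple_gap:
  fixes k Y :: int
  assumes "k > 0" "odd Y" "Y \<noteq> 1"
  shows "real_of_int k \<le> \<bar>of_int (k * Y) / 2 - of_int k / 2\<bar>"
proof -
  have "2 \<le> \<bar>Y - 1\<bar>" using assms(2,3) by presburger
  then have "k * 2 \<le> k * \<bar>Y - 1\<bar>" using assms(1) by (intro mult_left_mono) simp_all
  also have "\<dots> = \<bar>k * (Y - 1)\<bar>" using assms(1) by (simp add: abs_mult)
  also have "\<dots> = \<bar>k * Y - k\<bar>" by (simp add: right_diff_distrib)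
  finally have "real_of_int (k * 2) \<le> of_int \<bar>k * Y - k\<bar>" by (simp only: of_int_le_iff)
  then show ?thesis by (simp add: abs_div_pos)
qed

context satin_split
begin

lemma axis_gap_diag: "axis_gap (G1 P) (of_int q / 2, 0) (diag_unit, diag_unit) (of_int q * diag_unit)"
  unfolding axis_gap_def
proof (intro conjI allI impI)
  show "of_int q * diag_unit > 0" using q_pos diag_unit_pos by simp
  have "between_glide_axis (G1 P) (line_thru (of_int (q * 3) / 2, 0) (diag_unit, diag_unit))"
    unfolding line_thru_diag_unit between_diag_iff by (intro exI[of _ 3]) simp
  moreover have "par_dist (of_int q / 2, 0) (diag_unit, diag_unit) (of_int (q * 3) / 2, 0) = of_int q * diag_unit"
    unfolding par_dist_diag using q_pos by simp
  ultimately show "\<exists>p'. between_glide_axis (G1 P) (line_thru p' (diag_unit, diag_unit)) \<and>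
      par_dist (of_int q / 2, 0) (diag_unit, diag_unit) p' = of_int q * diag_unit" by blast
next
  fix p' assume h: "between_glide_axis (G1 P) (line_thru p' (diag_unit, diag_unit)) \<and>
      line_thru p' (diag_unit, diag_unit) \<noteq> line_thru (of_int q / 2, 0) (diag_unit, diag_unit)"
  have L: "line_thru p' (diag_unit, diag_unit) = diag_line (fst p' - snd p')"
    using line_thru_diag[of "(diag_unit, diag_unit)"] diag_unit_pos by simp
  obtain Y where "odd Y" and Y: "fst p' - snd p' = of_int (q * Y) / 2"
    using h between_diag_iff unfolding L by blast
  have "Y \<noteq> 1"
  proof
    assume "Y = 1"
    then show False using h unfolding L line_thru_diag_unit Y by simp
  qed
  have "of_int q \<le> \<bar>(fst p' - snd p') - of_int q / 2\<bar>"
    unfolding Y using odd_multiple_gap[OF q_pos \<open>odd Y\<close> \<open>Y \<noteq> 1\<close>] .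
  then show "of_int q * diag_unit \<le> par_dist (of_int q / 2, 0) (diag_unit, diag_unit) p'"
    unfolding par_dist_diag using diag_unit_pos by (simp add: mult.commute)
qed

lemma axis_gap_antidiag:
  "axis_gap (G1 P) (1 + of_int p / 2, 0) (diag_unit, - diag_unit) (of_int p * diag_unit)"
  unfolding axis_gap_def
proof (intro conjI allI impI)
  show "of_int p * diag_unit > 0" using p_pos diag_unit_pos by simp
  have "between_glide_axis (G1 P) (line_thru (1 + of_int (p * 3) / 2, 0) (diag_unit, - diag_unit))"
    unfolding line_thru_diag_unit between_antidiag_iff by (intro exI[of _ 3]) simp
  moreover have "par_dist (1 + of_int p / 2, 0) (diag_unit, - diag_unit) (1 + of_int (p * 3) / 2, 0)
      = of_int p * diag_unit"
    unfolding par_dist_antidiag using p_pos by simp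
  ultimately show "\<exists>p'. between_glide_axis (G1 P) (line_thru p' (diag_unit, - diag_unit)) \<and>
      par_dist (1 + of_int p / 2, 0) (diag_unit, - diag_unit) p' = of_int p * diag_unit" by blast
next
  fix p' assume h: "between_glide_axis (G1 P) (line_thru p' (diag_unit, - diag_unit)) \<and>
      line_thru p' (diag_unit, - diag_unit) \<noteq> line_thru (1 + of_int p / 2, 0) (diag_unit, - diag_unit)"
  have L: "line_thru p' (diag_unit, - diag_unit) = antidiag_line (fst p' + snd p')"
    using line_thru_antidiag[of "(diag_unit, - diag_unit)"] diag_unit_pos by simp
  obtain X where "odd X" and X: "fst p' + snd p' = 1 + of_int (p * X) / 2"
    using h between_antidiag_iff unfolding L by blast
  have "X \<noteq> 1"
  proof
    assume "X = 1"
    then show False using h unfolding L line_thru_diag_unit X by simp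
  qed
  have "of_int p \<le> \<bar>(fst p' + snd p') - (1 + of_int p / 2)\<bar>"
    unfolding X using odd_multiple_gap[OF p_pos \<open>odd X\<close> \<open>X \<noteq> 1\<close>] by simp
  then show "of_int p * diag_unit \<le> par_dist (1 + of_int p / 2, 0) (diag_unit, - diag_unit) p'"
    unfolding par_dist_antidiag using diag_unit_pos by (simp add: mult.commute)
qed

lemma central_rect_satin:
  "central_rect (G1 P) (of_int q * diag_unit) (of_int p * diag_unit)"
  "central_rect (G1 P) (of_int p * diag_unit) (of_int q * diag_unit)"
proof -
  have axes: "between_glide_axis (G1 P) (line_thru (of_int q / 2, 0) (diag_unit, diag_unit))"
    "between_glide_axis (G1 P) (line_thru (1 + of_int p / 2, 0) (diag_unit, - diag_unit))"
    unfolding line_thru_diag_unit between_diag_iff between_antidiag_iff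
    by (intro exI[of _ 1]; simp)+
  have orth: "dotp (diag_unit, diag_unit) (diag_unit, - diag_unit) = 0"
    "dotp (diag_unit, - diag_unit) (diag_unit, diag_unit) = 0" by (simp_all add: dotp_def)
  show "central_rect (G1 P) (of_int q * diag_unit) (of_int p * diag_unit)"
    "central_rect (G1 P) (of_int p * diag_unit) (of_int q * diag_unit)"
    unfolding central_rect_def using diag_unit_dotp orth axes axis_gap_diag axis_gap_antidiag by blast+
qed

theorem species28o_satin:
  assumes "odd n"
  shows "species28o P"
proof -
  have odd_pq: "odd (nat q)" "odd (nat p)" using assms pq_eq p_pos q_pos by (auto simp: even_nat_iff)
  have "coprime (int (nat q)) (int (nat p))"
    using coprime_p_q_odd[OF assms] p_pos q_pos by (simp add: coprime_commute)
  then have "coprime (nat q) (nat p)" by (simp only: coprime_int_iff)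
  moreover have "half_diag = diag_unit" unfolding half_diag_def cell_diag_def diag_unit_def by simp
  ultimately have "\<exists>a b :: nat. odd a \<and> odd b \<and> coprime a b \<and>
      central_rect (G1 P) (a * half_diag) (b * half_diag)"
    using odd_pq central_rect_satin(1) p_pos q_pos by (intro exI[of _ "nat q"] exI[of _ "nat p"]) simp
  then show ?thesis unfolding species28o_def using species28_satin supp_centre_odd[OF assms] by blast
qed

theorem species28e_satin:
  assumes "even n"
  shows "species28e P"
proof -
  note halves = half_factors_even[OF assms]
  define p' q' where "p' = nat (p div 2)" and "q' = nat (q div 2)"
  have rect: "of_int q * diag_unit = real q' * cell_diag" "of_int p * diag_unit = real p' * cell_diag"
    using halves(1,2) p_pos q_pos unfolding p'_def q'_def cell_diag_def diag_unit_def by simp_all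
  have "coprime (int p') (int q')" using halves(1-3) p_pos q_pos unfolding p'_def q'_def by simp
  then have cop: "coprime p' q'" by (simp only: coprime_int_iff)
  have "odd (p' + q')" using halves(1,2,4) p_pos q_pos unfolding p'_def q'_def by (simp add: even_nat_iff)
  then have "\<exists>a b :: nat. odd a \<and> even b \<and> coprime a b \<and>
      central_rect (G1 P) (a * cell_diag) (b * cell_diag)"
  proof (cases "odd q'")
    case True
    then have "even p'" using \<open>odd (p' + q')\<close> by simp
    then show ?thesis using True cop central_rect_satin(1) rect
      by (intro exI[of _ q'] exI[of _ p']) (simp add: coprime_commute)
  next
    case False
    then have "odd p'" using \<open>odd (p' + q')\<close> by simp
    then show ?thesis using False cop central_rect_satin(2) rect
      by (intro exI[of _ p'] exI[of _ q']) simp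
  qed
  then show ?thesis unfolding species28e_def using species28_satin supp_centre_even[OF assms] by blast
qed

end

theorem theorem2:
  fixes n s :: int
  assumes "n > 0" and "coprime n s" and "rhombic_satin n s"
  shows "(odd n \<longrightarrow> species28o (satin n s)) \<and> (even n \<longrightarrow> species28e (satin n s))"
proof -
  note rh = rhombic_satin_conditions[OF assms]
  obtain p q where pq: "p > 0" "q > 0" "p * q = n" "q dvd s - 1" "p dvd s + 1"
    using modulus_split[OF assms(1) rh(1)] by blast
  have "even n \<Longrightarrow> odd ((s-1) div q) \<and> odd ((s+1) div p) \<and> even p \<and> even q"
    using modulus_split_even[OF pq _ assms(2)] rh(3) by blast
  then interpret satin_split n s p q
    using rh(1,2) assms(2) pq by unfold_locales auto
  show ?thesis using species28o_satin species28e_satin by blast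
qed

end
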